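(* Let $P=\{S_1,\ldots,S_n\}$ be a homothetic packing of $n$ squares with contact graph $G=([n],E)$, and let $\{i,j\},\{k,\ell\}\in E$ be two edges sharing no vertex. Then: (1) the interiors of $S_i\cup S_j$ and $S_k\cup S_\ell$ are disjoint; (2) if the closed segments $[p_i,p_j]$ and $[p_k,p_\ell]$ intersect, then the squares $S_i,S_j,S_k,S_\ell$ share a corner, the edges $\{i,j\},\{k,\ell\}$ lie in $E_x\cap E_y$, and the edges $\{i,k\},\{i,\ell\},\{j,k\},\{j,\ell\}$ lie in the symmetric difference $E_x\triangle E_y$.
   Context: Let $S=\{(x,y): -1\le x,y\le 1\}$. A homothetic packing of $n$ squares is a set $P=\{S_1,\ldots,S_n\}$ with $S_i=r_iS+p_i$, $r_i>0$, $p_i=(x_i,y_i)\in\mathbb{R}^2$, such that distinct squares have disjoint interiors. Its contact graph is $G=([n],E)$ where $\{i,j\}\in E$ iff $i\ne j$ and $S_i\cap S_j\ne\emptyset$. $E_x$ is the set of pairs $\{i,j\}\in E$ with $r_i+r_j=|x_i-x_j|\ge|y_i-y_j|$, and $E_y$ the set with $r_i+r_j=|y_i-y_j|\ge|x_i-x_j|$. $[p,q]$ denotes the closed line segment between $p$ and $q$. Four squares share a corner if they have a common point which is a corner of each of them. *)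

theory Defs
  imports "HOL-Analysis.Analysis"
begin

definition std_square :: "(real \<times> real) set" where
  "std_square = {(x, y). -1 \<le> x \<and> x \<le> 1 \<and> -1 \<le> y \<and> y \<le> 1}"

definition hsq :: "real \<Rightarrow> real \<times> real \<Rightarrow> (real \<times> real) set" where
  "hsq r p = (\<lambda>z. r *\<^sub>R z + p) ` std_square"

text \<open>Squares are indexed by {0..<n} (instead of [n] = {1..n}).\<close>
definition homothetic_packing :: "nat \<Rightarrow> (nat \<Rightarrow> real) \<Rightarrow> (nat \<Rightarrow> real \<times> real) \<Rightarrow> bool" where
  "homothetic_packing n r p \<longleftrightarrow>
     (\<forall>i<n. r i > 0) \<and>
     (\<forall>i<n. \<forall>j<n. i \<noteq> j \<longrightarrow> interior (hsq (r i) (p i)) \<inter> interior (hsq (r j) (p j)) = {})"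

definition contact_edge :: "nat \<Rightarrow> (nat \<Rightarrow> real) \<Rightarrow> (nat \<Rightarrow> real \<times> real) \<Rightarrow> nat \<Rightarrow> nat \<Rightarrow> bool" where
  "contact_edge n r p i j \<longleftrightarrow> i < n \<and> j < n \<and> i \<noteq> j \<and> hsq (r i) (p i) \<inter> hsq (r j) (p j) \<noteq> {}"

definition edge_x :: "nat \<Rightarrow> (nat \<Rightarrow> real) \<Rightarrow> (nat \<Rightarrow> real \<times> real) \<Rightarrow> nat \<Rightarrow> nat \<Rightarrow> bool" where
  "edge_x n r p i j \<longleftrightarrow> contact_edge n r p i j \<and>
     r i + r j = \<bar>fst (p i) - fst (p j)\<bar> \<and> \<bar>fst (p i) - fst (p j)\<bar> \<ge> \<bar>snd (p i) - snd (p j)\<bar>"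

definition edge_y :: "nat \<Rightarrow> (nat \<Rightarrow> real) \<Rightarrow> (nat \<Rightarrow> real \<times> real) \<Rightarrow> nat \<Rightarrow> nat \<Rightarrow> bool" where
  "edge_y n r p i j \<longleftrightarrow> contact_edge n r p i j \<and>
     r i + r j = \<bar>snd (p i) - snd (p j)\<bar> \<and> \<bar>snd (p i) - snd (p j)\<bar> \<ge> \<bar>fst (p i) - fst (p j)\<bar>"

definition corners :: "real \<Rightarrow> real \<times> real \<Rightarrow> (real \<times> real) set" where
  "corners r p = {(fst p + s * r, snd p + t * r) | s t. s \<in> {-1, 1} \<and> t \<in> {-1, 1}}"

definition share_corner :: "(nat \<Rightarrow> real) \<Rightarrow> (nat \<Rightarrow> real \<times> real) \<Rightarrow> nat set \<Rightarrow> bool" where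
  "share_corner r p I \<longleftrightarrow> (\<exists>c. \<forall>i\<in>I. c \<in> corners (r i) (p i))"

end

(*
  Axis-parallel squares are boxes: S_i and S_j have disjoint interiors iff their centres are
  at least r_i + r_j apart in some coordinate, and they meet iff they are at most r_i + r_j
  apart in both. Part (1) holds for any four closed sets with pairwise disjoint interiors.
  For part (2), the segment [p_i, p_j] of a contact edge runs through the interior of
  S_i \<union> S_j, except at the point dividing it in the ratio r_i : r_j when S_i and S_j meet
  diagonally there. A common point q of both segments lies in S_k \<union> S_l, the closure of its
  interior, so by (1) it is not interior to S_i \<union> S_j; hence both pairs meet diagonally at q.
  The four squares then lie in distinct quadrants at q with i, j and k, l opposite, so each
  cross pair occupies adjacent quadrants and is separated in exactly one coordinate.
*)
theory Submission
  imports Defs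
begin

lemma hsq_eq_Times:
  assumes "r > 0"
  shows "hsq r p = {fst p - r .. fst p + r} \<times> {snd p - r .. snd p + r}"
proof (intro set_eqI iffI)
  fix z assume "z \<in> hsq r p"
  then obtain u v where "\<bar>u\<bar> \<le> 1" "\<bar>v\<bar> \<le> 1" "z = (r * u + fst p, r * v + snd p)"
    unfolding hsq_def std_square_def by (auto simp: abs_le_iff prod_eq_iff)
  moreover have "\<bar>r * u\<bar> \<le> r" "\<bar>r * v\<bar> \<le> r"
    using calculation assms by (simp_all add: abs_mult mult_left_le)
  ultimately show "z \<in> {fst p - r .. fst p + r} \<times> {snd p - r .. snd p + r}"
    by (auto simp: abs_le_iff)
next
  fix z assume z: "z \<in> {fst p - r .. fst p + r} \<times> {snd p - r .. snd p + r}"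
  have "z = r *\<^sub>R ((fst z - fst p) / r, (snd z - snd p) / r) + p"
    using assms by (simp add: prod_eq_iff)
  moreover have "((fst z - fst p) / r, (snd z - snd p) / r) \<in> std_square"
    using z assms by (auto simp: std_square_def field_simps)
  ultimately show "z \<in> hsq r p"
    unfolding hsq_def by blast
qed

lemma mem_hsq_iff:
  "r > 0 \<Longrightarrow> z \<in> hsq r p \<longleftrightarrow> \<bar>fst z - fst p\<bar> \<le> r \<and> \<bar>snd z - snd p\<bar> \<le> r"
  by (cases z) (auto simp: hsq_eq_Times abs_le_iff)

lemma interior_hsq:
  "r > 0 \<Longrightarrow> interior (hsq r p) = {fst p - r <..< fst p + r} \<times> {snd p - r <..< snd p + r}"
  by (simp add: hsq_eq_Times interior_Times)

lemma mem_interior_hsq_iff: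
  "r > 0 \<Longrightarrow> z \<in> interior (hsq r p) \<longleftrightarrow> \<bar>fst z - fst p\<bar> < r \<and> \<bar>snd z - snd p\<bar> < r"
  by (cases z) (auto simp: interior_hsq abs_less_iff)

lemma closed_hsq: "r > 0 \<Longrightarrow> closed (hsq r p)"
  by (simp add: hsq_eq_Times closed_Times)

lemma closure_interior_hsq: "r > 0 \<Longrightarrow> closure (interior (hsq r p)) = hsq r p"
  by (simp add: hsq_eq_Times interior_Times closure_Times)

lemma hsq_Un_subset_closure_interior:
  assumes "r > 0" "s > 0"
  shows "hsq r a \<union> hsq s b \<subseteq> closure (interior (hsq r a \<union> hsq s b))"
  using closure_mono[OF interior_mono[OF Un_upper1[of "hsq r a" "hsq s b"]]]
    closure_mono[OF interior_mono[OF Un_upper2[of "hsq s b" "hsq r a"]]]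
  unfolding closure_interior_hsq[OF assms(1)] closure_interior_hsq[OF assms(2)] by (rule Un_least)

lemma hsq_Int_hsq_eq_empty_iff:
  assumes "r > 0" "s > 0"
  shows "hsq r a \<inter> hsq s b = {} \<longleftrightarrow> r + s < \<bar>fst a - fst b\<bar> \<or> r + s < \<bar>snd a - snd b\<bar>"
  using assms by (auto simp: hsq_eq_Times Times_Int_Times abs_less_iff)

lemma interior_hsq_Int_eq_empty_iff:
  assumes "r > 0" "s > 0"
  shows "interior (hsq r a) \<inter> interior (hsq s b) = {} \<longleftrightarrow>
    r + s \<le> \<bar>fst a - fst b\<bar> \<or> r + s \<le> \<bar>snd a - snd b\<bar>"
  using assms by (auto simp: interior_hsq Times_Int_Times abs_le_iff)

lemma mem_corners_iff:
  assumes "r > 0"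
  shows "q \<in> corners r a \<longleftrightarrow> \<bar>fst q - fst a\<bar> = r \<and> \<bar>snd q - snd a\<bar> = r"
proof
  assume "q \<in> corners r a"
  then show "\<bar>fst q - fst a\<bar> = r \<and> \<bar>snd q - snd a\<bar> = r"
    using assms unfolding corners_def by auto
next
  assume abs_eq: "\<bar>fst q - fst a\<bar> = r \<and> \<bar>snd q - snd a\<bar> = r"
  let ?s = "sgn (fst q - fst a)" and ?t = "sgn (snd q - snd a)"
  have "q = (fst a + ?s * r, snd a + ?t * r)"
    using abs_eq sgn_mult_abs[of "fst q - fst a"] sgn_mult_abs[of "snd q - snd a"]
    by (simp add: prod_eq_iff)
  moreover have "?s \<in> {-1, 1}" "?t \<in> {-1, 1}"
    using abs_eq assms by (auto simp: sgn_if)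
  ultimately show "q \<in> corners r a"
    unfolding corners_def by blast
qed

lemma corners_subset_hsq: "r > 0 \<Longrightarrow> corners r a \<subseteq> hsq r a"
  by (auto simp: mem_corners_iff mem_hsq_iff)

lemma open_Int_interior_Un_eq_empty:
  fixes U A B :: "'a::topological_space set"
  assumes "open U" "closed A" "closed B"
    and "U \<inter> interior A = {}" "U \<inter> interior B = {}"
  shows "U \<inter> interior (A \<union> B) = {}"
proof -
  define V where "V = U \<inter> interior (A \<union> B)"
  have "open V"
    using assms(1) by (simp add: V_def open_Int)
  have "V - A \<subseteq> B"
    using interior_subset by (auto simp: V_def)
  then have "V - A \<subseteq> interior B"
    using \<open>open V\<close> assms(2) by (simp add: interior_maximal open_Diff)
  then have "V \<subseteq> A"
    using assms(5) by (auto simp: V_def)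
  then have "V \<subseteq> interior A"
    using \<open>open V\<close> by (rule interior_maximal)
  then show ?thesis
    using assms(4) by (auto simp: V_def)
qed

lemma interior_Un_Int_interior_Un_eq_empty:
  fixes A B C D :: "'a::topological_space set"
  assumes "closed A" "closed B" "closed C" "closed D"
    and "interior A \<inter> interior C = {}" "interior A \<inter> interior D = {}"
    and "interior B \<inter> interior C = {}" "interior B \<inter> interior D = {}"
  shows "interior (A \<union> B) \<inter> interior (C \<union> D) = {}"
proof -
  have "interior C \<inter> interior (A \<union> B) = {}"
    using assms(1,2,5,7) by (intro open_Int_interior_Un_eq_empty) (auto simp: Int_commute)
  moreover have "interior D \<inter> interior (A \<union> B) = {}"
    using assms(1,2,6,8) by (intro open_Int_interior_Un_eq_empty) (auto simp: Int_commute)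
  ultimately show ?thesis
    using assms(3,4) by (intro open_Int_interior_Un_eq_empty) (auto simp: Int_commute)
qed

lemma mem_interior_Un_touching_intervals:
  fixes u a b r s :: real
  assumes "r > 0" "s > 0" "\<bar>u - a\<bar> = r" "\<bar>u - b\<bar> = s" "\<bar>a - b\<bar> = r + s"
  shows "u \<in> interior ({a - r .. a + r} \<union> {b - s .. b + s})"
proof (rule interiorI)
  show "open {u - min r s <..< u + min r s}" by simp
  show "u \<in> {u - min r s <..< u + min r s}" using assms by simp
  have "u = a + r \<and> u = b - s \<or> u = a - r \<and> u = b + s"
    using assms by linarith
  then show "{u - min r s <..< u + min r s} \<subseteq> {a - r .. a + r} \<union> {b - s .. b + s}"
    by auto
qed

lemma closed_segment_abs_dist:
  fixes a b q :: "real \<times> real"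
  assumes "q = (1 - t) *\<^sub>R a + t *\<^sub>R b" "0 \<le> t" "t \<le> 1"
  shows "\<bar>fst q - fst a\<bar> = t * \<bar>fst a - fst b\<bar>" "\<bar>snd q - snd a\<bar> = t * \<bar>snd a - snd b\<bar>"
    "\<bar>fst q - fst b\<bar> = (1 - t) * \<bar>fst a - fst b\<bar>" "\<bar>snd q - snd b\<bar> = (1 - t) * \<bar>snd a - snd b\<bar>"
proof -
  have "fst q - fst a = t * (fst b - fst a)" "snd q - snd a = t * (snd b - snd a)"
    "fst q - fst b = (1 - t) * (fst a - fst b)" "snd q - snd b = (1 - t) * (snd a - snd b)"
    unfolding assms(1) by (simp_all add: algebra_simps)
  then show "\<bar>fst q - fst a\<bar> = t * \<bar>fst a - fst b\<bar>" "\<bar>snd q - snd a\<bar> = t * \<bar>snd a - snd b\<bar>"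
    "\<bar>fst q - fst b\<bar> = (1 - t) * \<bar>fst a - fst b\<bar>" "\<bar>snd q - snd b\<bar> = (1 - t) * \<bar>snd a - snd b\<bar>"
    using assms(2,3) by (simp_all add: abs_mult abs_minus_commute)
qed

lemma interior_Times_Un_Times:
  "interior (A \<union> A') \<times> interior (B \<inter> B') \<subseteq> interior (A \<times> B \<union> A' \<times> B')"
  "interior (B \<inter> B') \<times> interior (A \<union> A') \<subseteq> interior (B \<times> A \<union> B' \<times> A')"
  unfolding interior_Times[symmetric] by (auto intro!: interior_mono)

lemma mem_interior_hsq_Un_if_touching_fst:
  assumes r: "r > 0" and s: "s > 0" and "\<bar>fst a - fst b\<bar> = r + s"
    and "\<bar>fst q - fst a\<bar> = r" "\<bar>fst q - fst b\<bar> = s"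
    and "\<bar>snd q - snd a\<bar> < r" "\<bar>snd q - snd b\<bar> < s"
  shows "q \<in> interior (hsq r a \<union> hsq s b)"
proof -
  have "fst q \<in> interior ({fst a - r .. fst a + r} \<union> {fst b - s .. fst b + s})"
    using assms by (intro mem_interior_Un_touching_intervals)
  moreover have "snd q \<in> interior ({snd a - r .. snd a + r} \<inter> {snd b - s .. snd b + s})"
    using assms(6,7) by (auto simp: abs_less_iff)
  ultimately show ?thesis
    using subsetD[OF interior_Times_Un_Times(1), of q]
    unfolding hsq_eq_Times[OF r] hsq_eq_Times[OF s] mem_Times_iff by blast
qed

lemma mem_interior_hsq_Un_if_touching_snd:
  assumes r: "r > 0" and s: "s > 0" and "\<bar>snd a - snd b\<bar> = r + s"
    and "\<bar>snd q - snd a\<bar> = r" "\<bar>snd q - snd b\<bar> = s"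
    and "\<bar>fst q - fst a\<bar> < r" "\<bar>fst q - fst b\<bar> < s"
  shows "q \<in> interior (hsq r a \<union> hsq s b)"
proof -
  have "snd q \<in> interior ({snd a - r .. snd a + r} \<union> {snd b - s .. snd b + s})"
    using assms by (intro mem_interior_Un_touching_intervals)
  moreover have "fst q \<in> interior ({fst a - r .. fst a + r} \<inter> {fst b - s .. fst b + s})"
    using assms(6,7) by (auto simp: abs_less_iff)
  ultimately show ?thesis
    using subsetD[OF interior_Times_Un_Times(2), of q]
    unfolding hsq_eq_Times[OF r] hsq_eq_Times[OF s] mem_Times_iff by blast
qed

definition opposite_corners ::
  "real \<Rightarrow> real \<times> real \<Rightarrow> real \<Rightarrow> real \<times> real \<Rightarrow> real \<times> real \<Rightarrow> bool" where
  "opposite_corners r a s b q \<longleftrightarrow> q \<in> corners r a \<and> q \<in> corners s b \<and>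
     \<bar>fst a - fst b\<bar> = r + s \<and> \<bar>snd a - snd b\<bar> = r + s"

lemma opposite_corners_commute:
  "opposite_corners r a s b q \<longleftrightarrow> opposite_corners s b r a q"
  by (auto simp: opposite_corners_def abs_minus_commute)

lemma interior_or_opposite_corners_at_contact_ratio:
  assumes r: "r > 0" and s: "s > 0"
    and near: "\<bar>fst a - fst b\<bar> \<le> r + s" "\<bar>snd a - snd b\<bar> \<le> r + s"
    and far: "r + s \<le> \<bar>fst a - fst b\<bar> \<or> r + s \<le> \<bar>snd a - snd b\<bar>"
    and t: "t * (r + s) = r" and q: "q = (1 - t) *\<^sub>R a + t *\<^sub>R b"
  shows "q \<in> interior (hsq r a \<union> hsq s b) \<or> opposite_corners r a s b q"
proof -
  have t_s: "(1 - t) * (r + s) = s"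
    using t by (simp add: algebra_simps)
  have "0 < t" "0 < 1 - t"
    using r s t t_s by (metis add_pos_pos zero_less_mult_pos2)+
  then have dist: "\<bar>fst q - fst a\<bar> = t * \<bar>fst a - fst b\<bar>" "\<bar>snd q - snd a\<bar> = t * \<bar>snd a - snd b\<bar>"
    "\<bar>fst q - fst b\<bar> = (1 - t) * \<bar>fst a - fst b\<bar>" "\<bar>snd q - snd b\<bar> = (1 - t) * \<bar>snd a - snd b\<bar>"
    using closed_segment_abs_dist[OF q] by simp_all
  have less: "t * \<bar>d\<bar> < r \<and> (1 - t) * \<bar>d\<bar> < s" if "\<bar>d\<bar> < r + s" for d
    using t t_s mult_strict_left_mono[OF that \<open>0 < t\<close>] mult_strict_left_mono[OF that \<open>0 < 1 - t\<close>]
    by simp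
  consider (corner) "\<bar>fst a - fst b\<bar> = r + s" "\<bar>snd a - snd b\<bar> = r + s"
    | (fst) "\<bar>fst a - fst b\<bar> = r + s" "\<bar>snd a - snd b\<bar> < r + s"
    | (snd) "\<bar>fst a - fst b\<bar> < r + s" "\<bar>snd a - snd b\<bar> = r + s"
    using near far by linarith
  then show ?thesis
  proof cases
    case corner
    then have "\<bar>fst q - fst a\<bar> = r" "\<bar>snd q - snd a\<bar> = r" "\<bar>fst q - fst b\<bar> = s" "\<bar>snd q - snd b\<bar> = s"
      using dist t t_s by simp_all
    then show ?thesis
      using corner r s by (simp add: opposite_corners_def mem_corners_iff)
  next
    case fst
    then have "\<bar>fst q - fst a\<bar> = r" "\<bar>fst q - fst b\<bar> = s"
      using dist t t_s by simp_all
    moreover have "\<bar>snd q - snd a\<bar> < r" "\<bar>snd q - snd b\<bar> < s"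
      using less[OF fst(2)] dist by simp_all
    ultimately show ?thesis
      using mem_interior_hsq_Un_if_touching_fst[OF r s fst(1)] by blast
  next
    case snd
    then have "\<bar>snd q - snd a\<bar> = r" "\<bar>snd q - snd b\<bar> = s"
      using dist t t_s by simp_all
    moreover have "\<bar>fst q - fst a\<bar> < r" "\<bar>fst q - fst b\<bar> < s"
      using less[OF snd(1)] dist by simp_all
    ultimately show ?thesis
      using mem_interior_hsq_Un_if_touching_snd[OF r s snd(2)] by blast
  qed
qed

lemma closed_segment_point_interior_or_opposite_corners:
  assumes r: "r > 0" and s: "s > 0"
    and "hsq r a \<inter> hsq s b \<noteq> {}" "interior (hsq r a) \<inter> interior (hsq s b) = {}"
    and "q \<in> closed_segment a b"
  shows "q \<in> interior (hsq r a \<union> hsq s b) \<or> opposite_corners r a s b q"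
proof -
  have near: "\<bar>fst a - fst b\<bar> \<le> r + s" "\<bar>snd a - snd b\<bar> \<le> r + s"
    and far: "r + s \<le> \<bar>fst a - fst b\<bar> \<or> r + s \<le> \<bar>snd a - snd b\<bar>"
    using assms(3,4) r s by (auto simp: hsq_Int_hsq_eq_empty_iff interior_hsq_Int_eq_empty_iff)
  obtain t where t: "0 \<le> t" "t \<le> 1" and q: "q = (1 - t) *\<^sub>R a + t *\<^sub>R b"
    using assms(5) unfolding closed_segment_def by auto
  note dist = closed_segment_abs_dist[OF q t]
  have "t * (r + s) + (1 - t) * (r + s) = r + s"
    by (simp add: algebra_simps)
  then consider "t * (r + s) < r" | "(1 - t) * (r + s) < s" | "t * (r + s) = r"
    by linarith
  then show ?thesis
  proof cases
    case 1
    have "t * \<bar>fst a - fst b\<bar> \<le> t * (r + s)" "t * \<bar>snd a - snd b\<bar> \<le> t * (r + s)"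
      using near t by (simp_all add: mult_left_mono)
    then have "q \<in> interior (hsq r a)"
      using 1 dist r by (simp add: mem_interior_hsq_iff)
    then show ?thesis
      using interior_mono[OF Un_upper1, of "hsq r a" "hsq s b"] by blast
  next
    case 2
    have "(1 - t) * \<bar>fst a - fst b\<bar> \<le> (1 - t) * (r + s)" "(1 - t) * \<bar>snd a - snd b\<bar> \<le> (1 - t) * (r + s)"
      using near t by (simp_all add: mult_left_mono)
    then have "q \<in> interior (hsq s b)"
      using 2 dist s by (simp add: mem_interior_hsq_iff)
    then show ?thesis
      using interior_mono[OF Un_upper2, of "hsq s b" "hsq r a"] by blast
  next
    case 3
    show ?thesis
      using interior_or_opposite_corners_at_contact_ratio[OF r s near far 3 q] .
  qed
qed

text \<open>If a and e both lie on the side of q opposite to c, they lie on the same side of q.\<close>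
lemma abs_diff_lt_if_opposite_to_common:
  fixes q a c e ra rc re :: real
  assumes "ra > 0" "rc > 0" "re > 0" "\<bar>q - a\<bar> = ra" "\<bar>q - c\<bar> = rc" "\<bar>q - e\<bar> = re"
    and "\<bar>a - c\<bar> = ra + rc" "\<bar>c - e\<bar> = rc + re"
  shows "\<bar>a - e\<bar> < ra + re"
proof -
  have "a = q - ra \<or> a = q + ra" "c = q - rc \<or> c = q + rc" "e = q - re \<or> e = q + re"
    using assms(4-6) by linarith+
  then show ?thesis
    using assms by (elim disjE) (simp_all add: abs_if split: if_splits)
qed

lemma packing_interior_Un_disjoint:
  assumes "homothetic_packing n r p" "i < n" "j < n" "k < n" "l < n" "{i, j} \<inter> {k, l} = {}"
  shows "interior (hsq (r i) (p i) \<union> hsq (r j) (p j)) \<inter>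
    interior (hsq (r k) (p k) \<union> hsq (r l) (p l)) = {}"
  using assms
  by (intro interior_Un_Int_interior_Un_eq_empty) (auto simp: homothetic_packing_def closed_hsq)

lemma opposite_corners_if_closed_segments_meet:
  assumes pack: "homothetic_packing n r p"
    and ij: "contact_edge n r p i j" and kl: "contact_edge n r p k l"
    and disj: "{i, j} \<inter> {k, l} = {}"
    and q: "q \<in> closed_segment (p i) (p j)" "q \<in> closed_segment (p k) (p l)"
  shows "opposite_corners (r i) (p i) (r j) (p j) q"
proof -
  have idx: "i < n" "j < n" "k < n" "l < n" "i \<noteq> j" "k \<noteq> l"
    using ij kl by (auto simp: contact_edge_def)
  then have pos: "r i > 0" "r j > 0" "r k > 0" "r l > 0"
    using pack by (auto simp: homothetic_packing_def)
  have touch: "hsq (r i) (p i) \<inter> hsq (r j) (p j) \<noteq> {}" "hsq (r k) (p k) \<inter> hsq (r l) (p l) \<noteq> {}"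
    using ij kl by (simp_all add: contact_edge_def)
  have apart: "interior (hsq (r i) (p i)) \<inter> interior (hsq (r j) (p j)) = {}"
    "interior (hsq (r k) (p k)) \<inter> interior (hsq (r l) (p l)) = {}"
    using pack idx by (simp_all add: homothetic_packing_def)
  note seg_ij = closed_segment_point_interior_or_opposite_corners[OF pos(1,2) touch(1) apart(1) q(1)]
  note seg_kl = closed_segment_point_interior_or_opposite_corners[OF pos(3,4) touch(2) apart(2) q(2)]
  have "q \<in> hsq (r k) (p k) \<union> hsq (r l) (p l)"
    using seg_kl interior_subset corners_subset_hsq[OF pos(3)] unfolding opposite_corners_def by blast
  also have "\<dots> \<subseteq> closure (interior (hsq (r k) (p k) \<union> hsq (r l) (p l)))"
    by (rule hsq_Un_subset_closure_interior[OF pos(3,4)])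
  finally have "q \<in> closure (interior (hsq (r k) (p k) \<union> hsq (r l) (p l)))" .
  moreover have "interior (hsq (r i) (p i) \<union> hsq (r j) (p j)) \<inter>
      closure (interior (hsq (r k) (p k) \<union> hsq (r l) (p l))) = {}"
    using packing_interior_Un_disjoint[OF pack idx(1-4) disj] by (simp add: open_Int_closure_eq_empty)
  ultimately have "q \<notin> interior (hsq (r i) (p i) \<union> hsq (r j) (p j))"
    by blast
  then show ?thesis
    using seg_ij by blast
qed

lemma edge_x_ne_edge_y_if_common_corner:
  assumes pack: "homothetic_packing n r p" and idx: "x < n" "y < n" "z < n" "x \<noteq> y" "x \<noteq> z"
    and qx: "q \<in> corners (r x) (p x)" and yz: "opposite_corners (r y) (p y) (r z) (p z) q"
  shows "edge_x n r p x y \<noteq> edge_y n r p x y"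
proof -
  have pos: "r x > 0" "r y > 0" "r z > 0"
    using pack idx by (auto simp: homothetic_packing_def)
  have corner: "\<bar>fst q - fst (p x)\<bar> = r x" "\<bar>snd q - snd (p x)\<bar> = r x"
    "\<bar>fst q - fst (p y)\<bar> = r y" "\<bar>snd q - snd (p y)\<bar> = r y"
    "\<bar>fst q - fst (p z)\<bar> = r z" "\<bar>snd q - snd (p z)\<bar> = r z"
    using qx yz pos by (simp_all add: opposite_corners_def mem_corners_iff)
  have diag: "\<bar>fst (p y) - fst (p z)\<bar> = r y + r z" "\<bar>snd (p y) - snd (p z)\<bar> = r y + r z"
    using yz by (simp_all add: opposite_corners_def)
  have "q \<in> hsq (r x) (p x)" "q \<in> hsq (r y) (p y)"
    using qx yz corners_subset_hsq[OF pos(1)] corners_subset_hsq[OF pos(2)]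
    unfolding opposite_corners_def by blast+
  then have contact: "contact_edge n r p x y"
    using idx unfolding contact_edge_def by blast
  have sep: "r x + r w \<le> \<bar>fst (p x) - fst (p w)\<bar> \<or> r x + r w \<le> \<bar>snd (p x) - snd (p w)\<bar>"
    if "w < n" "x \<noteq> w" "r w > 0" for w
    using pack idx(1) that pos(1)
    by (simp add: homothetic_packing_def flip: interior_hsq_Int_eq_empty_iff)
  have not_diag: "\<not> (\<bar>fst (p x) - fst (p y)\<bar> = r x + r y \<and> \<bar>snd (p x) - snd (p y)\<bar> = r x + r y)"
  proof
    assume "\<bar>fst (p x) - fst (p y)\<bar> = r x + r y \<and> \<bar>snd (p x) - snd (p y)\<bar> = r x + r y"
    then have "\<bar>fst (p x) - fst (p z)\<bar> < r x + r z" "\<bar>snd (p x) - snd (p z)\<bar> < r x + r z"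
      using abs_diff_lt_if_opposite_to_common[OF pos corner(1,3,5) _ diag(1)]
        abs_diff_lt_if_opposite_to_common[OF pos corner(2,4,6) _ diag(2)] by simp_all
    then show False
      using sep[OF idx(3,5) pos(3)] by linarith
  qed
  have "\<bar>fst (p x) - fst (p y)\<bar> \<le> r x + r y" "\<bar>snd (p x) - snd (p y)\<bar> \<le> r x + r y"
    using corner by linarith+
  then show ?thesis
    using contact not_diag sep[OF idx(2,4) pos(2)] by (auto simp: edge_x_def edge_y_def)
qed

theorem lemma12:
  fixes n :: nat and r :: "nat \<Rightarrow> real" and p :: "nat \<Rightarrow> real \<times> real" and i j k l :: nat
  assumes "homothetic_packing n r p"
    and "contact_edge n r p i j" and "contact_edge n r p k l"
    and "{i, j} \<inter> {k, l} = {}"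
  shows "interior (hsq (r i) (p i) \<union> hsq (r j) (p j)) \<inter>
           interior (hsq (r k) (p k) \<union> hsq (r l) (p l)) = {} \<and>
         (closed_segment (p i) (p j) \<inter> closed_segment (p k) (p l) \<noteq> {} \<longrightarrow>
           share_corner r p {i, j, k, l} \<and>
           edge_x n r p i j \<and> edge_y n r p i j \<and> edge_x n r p k l \<and> edge_y n r p k l \<and>
           (edge_x n r p i k \<noteq> edge_y n r p i k) \<and> (edge_x n r p i l \<noteq> edge_y n r p i l) \<and>
           (edge_x n r p j k \<noteq> edge_y n r p j k) \<and> (edge_x n r p j l \<noteq> edge_y n r p j l))"
proof (intro conjI impI)
  have idx: "i < n" "j < n" "k < n" "l < n"
    using assms(2,3) by (simp_all add: contact_edge_def)
  have distinct: "i \<noteq> k" "i \<noteq> l" "j \<noteq> k" "j \<noteq> l"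
    using assms(4) by auto
  show "interior (hsq (r i) (p i) \<union> hsq (r j) (p j)) \<inter>
      interior (hsq (r k) (p k) \<union> hsq (r l) (p l)) = {}"
    using packing_interior_Un_disjoint[OF assms(1) idx assms(4)] .
  assume "closed_segment (p i) (p j) \<inter> closed_segment (p k) (p l) \<noteq> {}"
  then obtain q where q: "q \<in> closed_segment (p i) (p j)" "q \<in> closed_segment (p k) (p l)"
    by blast
  have ij: "opposite_corners (r i) (p i) (r j) (p j) q"
    using opposite_corners_if_closed_segments_meet[OF assms q] .
  have kl: "opposite_corners (r k) (p k) (r l) (p l) q"
    using opposite_corners_if_closed_segments_meet[OF assms(1,3,2) _ q(2,1)] assms(4) by blast
  then have lk: "opposite_corners (r l) (p l) (r k) (p k) q"
    by (simp add: opposite_corners_commute)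
  show "share_corner r p {i, j, k, l}"
    using ij kl unfolding share_corner_def opposite_corners_def by blast
  show "edge_x n r p i j" "edge_y n r p i j" "edge_x n r p k l" "edge_y n r p k l"
    using assms(2,3) ij kl by (simp_all add: edge_x_def edge_y_def opposite_corners_def)
  have "q \<in> corners (r i) (p i)" "q \<in> corners (r j) (p j)"
    using ij by (simp_all add: opposite_corners_def)
  then show "edge_x n r p i k \<noteq> edge_y n r p i k" "edge_x n r p i l \<noteq> edge_y n r p i l"
    "edge_x n r p j k \<noteq> edge_y n r p j k" "edge_x n r p j l \<noteq> edge_y n r p j l"
    using edge_x_ne_edge_y_if_common_corner[OF assms(1) idx(1,3,4) distinct(1,2) _ kl]
      edge_x_ne_edge_y_if_common_corner[OF assms(1) idx(1,4,3) distinct(2,1) _ lk]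
      edge_x_ne_edge_y_if_common_corner[OF assms(1) idx(2,3,4) distinct(3,4) _ kl]
      edge_x_ne_edge_y_if_common_corner[OF assms(1) idx(2,4,3) distinct(4,3) _ lk]
    by blast+
qed

end
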